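(* Let $(\mathcal A,\varphi,\mathcal F,\Phi)$ be a ncps of type B$'$ with associated infinitesimal ncps $(\mathcal B,\varphi,\varphi')$. Let $a_1,a_2\in\mathcal A$ and $f_1,f_2\in\mathcal F$ and assume that $(\{a_1,a_2\},\{f_1,f_2\})$ is B$'$-free, i.e. with $\mathcal A_i$ the unital subalgebra generated by $a_i$ and $\mathcal F_j$ the subalgebra generated by $f_j$, the pair $((\mathcal A_i)_{i=1,2},(\mathcal F_j)_{j=1,2})$ is B$'$-free. Let $b_i=a_i+f_i\in\mathcal B$. If $a_i$ has distribution $\mu_i$ w.r.t. $\varphi$ and $f_i$ has distribution $\nu_i$ w.r.t. $\varphi'$ ($i=1,2$), then the infinitesimal distribution of $b_1+b_2$ w.r.t. $(\varphi,\varphi')$ is $(\mu_1\boxplus\mu_2,\nu)$, where $\nu$ is characterized by $$G_\nu(z)=G_{\nu_1+\nu_2}(F_{\mu_1\boxplus\mu_2}(z))\,F_{\mu_1\boxplus\mu_2}'(z).$$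
   Context: Ncps of type B$'$ $(\mathcal A,\varphi,\mathcal F,\Phi)$: $\mathcal A$ unital complex algebra, $\varphi(1_{\mathcal A})=1$, $\mathcal F$ an algebra which is an $\mathcal A$-bimodule compatible with its multiplication, $\Phi:\mathcal F\to\mathbb C$ linear. $\mathcal B=\mathcal A\oplus\mathcal F$ with product $(a_1,f_1)(a_2,f_2)=(a_1a_2,a_1f_2+f_1a_2+f_1f_2)$; $\varphi(a+f):=\varphi(a)$, $\varphi'(a+f):=\Phi(f)$. For unital subalgebras $(\mathcal A_i)_{i\in I}$ of $\mathcal A$ and subalgebras $(\mathcal F_j)_{j\in J}$ of $\mathcal F$, the pair is B$'$-free if: (i) $(\mathcal A_i)$ are free w.r.t. $\varphi$ ($\varphi(c_1\cdots c_n)=0$ for alternating indices and centered $c_l\in\mathcal A_{i_l}$); (ii) with $\mathcal A_0$ the algebra generated by all $\mathcal A_i$ and $\mathcal F_0$ the algebra generated by all $\mathcal F_j$, $\Phi(c_0g_1c_1\cdots c_{n-1}g_nc_n)=\varphi(c_0c_n)\prod_{l=1}^{n-1}\varphi(c_l)\,\Phi(g_1\cdots g_n)$ for $c_l\in\mathcal A_0$, $g_l\in\mathcal F_0$ (cyclic-antimonotone independence); (iii) $\Phi(g_1\cdots g_n)=0$ whenever $n\ge2$, $j_1\ne j_2\ne\cdots\ne j_n$, $g_l\in\mathcal F_{j_l}$ (trivial independence). The distribution of $b$ w.r.t. $\omega$ is the functional $x^n\mapsto\omega(b^n)$ on $\mathbb C[x]$ ($b^0=1$); infinitesimal distribution w.r.t.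 $(\varphi,\varphi')$ is the pair. $\mu_1\boxplus\mu_2$ is the free convolution (distribution of the sum of two free elements with distributions $\mu_1,\mu_2$). $G_\mu(z)=\sum_{n\ge0}\mu(x^n)z^{-n-1}$, $F_\mu=1/G_\mu$, as formal series; $\nu_1+\nu_2$ is the sum of linear functionals. *)

theory Defs
  imports Main "HOL-Computational_Algebra.Formal_Laurent_Series"
begin

text \<open>The algebra A is a type 'a of class ring_1 (unital ring) with a complex scalar
multiplication sA making it a complex vector space and an algebra; F is a type 'f of
class ring (not necessarily unital) with complex scalar multiplication sF; lA and rA
are the left and right actions of A on F.\<close>

definition lin_fun :: "(complex \<Rightarrow> 'v \<Rightarrow> 'v) \<Rightarrow> ('v::ab_group_add \<Rightarrow> complex) \<Rightarrow> bool" where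
  "lin_fun s L \<longleftrightarrow> (\<forall>x y. L (x + y) = L x + L y) \<and> (\<forall>c x. L (s c x) = c * L x)"

definition ncps_B' ::
  "(complex \<Rightarrow> 'a::ring_1 \<Rightarrow> 'a) \<Rightarrow> (complex \<Rightarrow> 'f::ring \<Rightarrow> 'f) \<Rightarrow>
   ('a \<Rightarrow> 'f \<Rightarrow> 'f) \<Rightarrow> ('f \<Rightarrow> 'a \<Rightarrow> 'f) \<Rightarrow> ('a \<Rightarrow> complex) \<Rightarrow> ('f \<Rightarrow> complex) \<Rightarrow> bool" where
  "ncps_B' sA sF lA rA \<phi> \<Phi> \<longleftrightarrow>
     \<comment> \<open>A is a unital complex algebra\<close>
     vector_space sA \<and>
     (\<forall>c x y. sA c (x * y) = sA c x * y \<and> sA c (x * y) = x * sA c y) \<and>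
     \<comment> \<open>F is a complex algebra\<close>
     vector_space sF \<and>
     (\<forall>c f g. sF c (f * g) = sF c f * g \<and> sF c (f * g) = f * sF c g) \<and>
     \<comment> \<open>F is an A-bimodule\<close>
     (\<forall>a b f. lA (a + b) f = lA a f + lA b f) \<and>
     (\<forall>a f g. lA a (f + g) = lA a f + lA a g) \<and>
     (\<forall>f g a. rA (f + g) a = rA f a + rA g a) \<and>
     (\<forall>f a b. rA f (a + b) = rA f a + rA f b) \<and>
     (\<forall>c a f. lA (sA c a) f = sF c (lA a f) \<and> lA a (sF c f) = sF c (lA a f)) \<and>
     (\<forall>c a f. rA f (sA c a) = sF c (rA f a) \<and> rA (sF c f) a = sF c (rA f a)) \<and>
     (\<forall>f. lA 1 f = f \<and> rA f 1 = f) \<and>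
     (\<forall>a b f. lA (a * b) f = lA a (lA b f)) \<and>
     (\<forall>f a b. rA f (a * b) = rA (rA f a) b) \<and>
     (\<forall>a f b. lA a (rA f b) = rA (lA a f) b) \<and>
     \<comment> \<open>compatibility of the bimodule structure with the multiplication of F\<close>
     (\<forall>a f g. lA a (f * g) = lA a f * g) \<and>
     (\<forall>f g a. rA (f * g) a = f * rA g a) \<and>
     (\<forall>f a g. rA f a * g = f * lA a g) \<and>
     \<comment> \<open>the functionals\<close>
     lin_fun sA \<phi> \<and> \<phi> 1 = 1 \<and> lin_fun sF \<Phi>"

section \<open>The associated infinitesimal ncps: B = A \<oplus> F, elements are pairs (a, f)\<close>

definition mulB :: "('a::ring_1 \<Rightarrow> 'f \<Rightarrow> 'f) \<Rightarrow> ('f::ring \<Rightarrow> 'a \<Rightarrow> 'f) \<Rightarrow> 'a \<times> 'f \<Rightarrow> 'a \<times> 'f \<Rightarrow> 'a \<times> 'f" where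
  "mulB lA rA x y = (fst x * fst y, lA (fst x) (snd y) + rA (snd x) (fst y) + snd x * snd y)"

definition oneB :: "'a::ring_1 \<times> 'f::ring" where
  "oneB = (1, 0)"

primrec powB :: "('a::ring_1 \<Rightarrow> 'f \<Rightarrow> 'f) \<Rightarrow> ('f::ring \<Rightarrow> 'a \<Rightarrow> 'f) \<Rightarrow> 'a \<times> 'f \<Rightarrow> nat \<Rightarrow> 'a \<times> 'f" where
  "powB lA rA b 0 = oneB"
| "powB lA rA b (Suc n) = mulB lA rA b (powB lA rA b n)"

definition prodB :: "('a::ring_1 \<Rightarrow> 'f \<Rightarrow> 'f) \<Rightarrow> ('f::ring \<Rightarrow> 'a \<Rightarrow> 'f) \<Rightarrow> ('a \<times> 'f) list \<Rightarrow> 'a \<times> 'f" where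
  "prodB lA rA bs = foldr (mulB lA rA) bs oneB"

definition phiB :: "('a \<Rightarrow> complex) \<Rightarrow> 'a \<times> 'f \<Rightarrow> complex" where
  "phiB \<phi> b = \<phi> (fst b)"

definition phiB' :: "('f \<Rightarrow> complex) \<Rightarrow> 'a \<times> 'f \<Rightarrow> complex" where
  "phiB' \<Phi> b = \<Phi> (snd b)"

section \<open>Distributions (as moment sequences: the functional x^n \<mapsto> \<omega>(b^n))\<close>

definition distB :: "('a::ring_1 \<Rightarrow> 'f \<Rightarrow> 'f) \<Rightarrow> ('f::ring \<Rightarrow> 'a \<Rightarrow> 'f) \<Rightarrow>
     ('a \<times> 'f \<Rightarrow> complex) \<Rightarrow> 'a \<times> 'f \<Rightarrow> nat \<Rightarrow> complex" where
  "distB lA rA \<omega> b = (\<lambda>n. \<omega> (powB lA rA b n))"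

definition distA :: "('a::monoid_mult \<Rightarrow> complex) \<Rightarrow> 'a \<Rightarrow> nat \<Rightarrow> complex" where
  "distA \<phi> a = (\<lambda>n. \<phi> (a ^ n))"

definition unital_subalg :: "(complex \<Rightarrow> 'a::ring_1 \<Rightarrow> 'a) \<Rightarrow> 'a set \<Rightarrow> bool" where
  "unital_subalg s S \<longleftrightarrow> 1 \<in> S \<and> 0 \<in> S \<and> (\<forall>x\<in>S. \<forall>y\<in>S. x + y \<in> S \<and> x * y \<in> S)
      \<and> (\<forall>c. \<forall>x\<in>S. s c x \<in> S)"

definition subalg :: "(complex \<Rightarrow> 'f::ring \<Rightarrow> 'f) \<Rightarrow> 'f set \<Rightarrow> bool" where
  "subalg s S \<longleftrightarrow> 0 \<in> S \<and> (\<forall>x\<in>S. \<forall>y\<in>S. x + y \<in> S \<and> x * y \<in> S)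
      \<and> (\<forall>c. \<forall>x\<in>S. s c x \<in> S)"

definition unital_alg_gen :: "(complex \<Rightarrow> 'a::ring_1 \<Rightarrow> 'a) \<Rightarrow> 'a set \<Rightarrow> 'a set" where
  "unital_alg_gen s X = \<Inter> {S. unital_subalg s S \<and> X \<subseteq> S}"

definition alg_gen :: "(complex \<Rightarrow> 'f::ring \<Rightarrow> 'f) \<Rightarrow> 'f set \<Rightarrow> 'f set" where
  "alg_gen s X = \<Inter> {S. subalg s S \<and> X \<subseteq> S}"

definition alternating :: "'i list \<Rightarrow> bool" where
  "alternating is \<longleftrightarrow> (\<forall>l. Suc l < length is \<longrightarrow> is ! l \<noteq> is ! Suc l)"

definition free_family :: "('a::ring_1 \<Rightarrow> complex) \<Rightarrow> 'i set \<Rightarrow> ('i \<Rightarrow> 'a set) \<Rightarrow> bool" where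
  "free_family \<phi> I As \<longleftrightarrow>
     (\<forall>is cs. length cs = length is \<and> is \<noteq> [] \<and> set is \<subseteq> I \<and> alternating is \<and>
        (\<forall>l < length cs. cs ! l \<in> As (is ! l) \<and> \<phi> (cs ! l) = 0)
        \<longrightarrow> \<phi> (prod_list cs) = 0)"

text \<open>The word c_0 g_1 c_1 ... g_n c_n, computed in B (it lies in F); cs = [c_0,...,c_n],
  gs = [g_1,...,g_n].\<close>
fun interleave :: "'a::zero list \<Rightarrow> 'f list \<Rightarrow> ('a \<times> 'f::zero) list" where
  "interleave (c # cs) (g # gs) = (c, 0) # (0, g) # interleave cs gs"
| "interleave cs [] = map (\<lambda>c. (c, 0)) cs"
| "interleave [] gs = map (\<lambda>g. (0, g)) gs"

definition B'_free ::
  "(complex \<Rightarrow> 'a::ring_1 \<Rightarrow> 'a) \<Rightarrow> (complex \<Rightarrow> 'f::ring \<Rightarrow> 'f) \<Rightarrow>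
   ('a \<Rightarrow> 'f \<Rightarrow> 'f) \<Rightarrow> ('f \<Rightarrow> 'a \<Rightarrow> 'f) \<Rightarrow> ('a \<Rightarrow> complex) \<Rightarrow> ('f \<Rightarrow> complex) \<Rightarrow>
   'i set \<Rightarrow> ('i \<Rightarrow> 'a set) \<Rightarrow> 'j set \<Rightarrow> ('j \<Rightarrow> 'f set) \<Rightarrow> bool" where
  "B'_free sA sF lA rA \<phi> \<Phi> I As J Fs \<longleftrightarrow>
     free_family \<phi> I As \<and>
     (let A0 = unital_alg_gen sA (\<Union>i\<in>I. As i); F0 = alg_gen sF (\<Union>j\<in>J. Fs j) in
      \<forall>cs gs. gs \<noteq> [] \<and> length cs = Suc (length gs) \<and> set cs \<subseteq> A0 \<and> set gs \<subseteq> F0 \<longrightarrow>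
        \<Phi> (snd (prodB lA rA (interleave cs gs))) =
          \<phi> (hd cs * last cs) * (\<Prod>l \<in> {1..<length gs}. \<phi> (cs ! l)) *
          \<Phi> (snd (prodB lA rA (map (\<lambda>g. (0, g)) gs)))) \<and>
     (\<forall>js gs. length gs = length js \<and> length gs \<ge> 2 \<and> set js \<subseteq> J \<and> alternating js \<and>
        (\<forall>l < length gs. gs ! l \<in> Fs (js ! l))
        \<longrightarrow> \<Phi> (snd (prodB lA rA (map (\<lambda>g. (0, g)) gs))) = 0)"

text \<open>G_\<mu>(z) = \<Sum>_n \<mu>(x^n) z^{-n-1}, as a formal Laurent series in u = 1/z.\<close>
definition G_fps :: "(nat \<Rightarrow> complex) \<Rightarrow> complex fps" where
  "G_fps \<mu> = fps_X * Abs_fps \<mu>"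

definition G_ser :: "(nat \<Rightarrow> complex) \<Rightarrow> complex fls" where
  "G_ser \<mu> = fps_to_fls (G_fps \<mu>)"

definition F_ser :: "(nat \<Rightarrow> complex) \<Rightarrow> complex fls" where
  "F_ser \<mu> = inverse (G_ser \<mu>)"

text \<open>Derivative with respect to z = 1/u: d/dz = - u^2 d/du.\<close>
definition deriv_z :: "complex fls \<Rightarrow> complex fls" where
  "deriv_z S = - (fls_X ^ 2 * fls_deriv S)"

text \<open>G_\<nu>(S(z)) for a series S in z with S = z + ... : G_\<nu>(w) = (G_fps \<nu>)(1/w),
  so G_\<nu>(S) is the formal composition of G_fps \<nu> with 1/S.\<close>
definition G_comp :: "(nat \<Rightarrow> complex) \<Rightarrow> complex fls \<Rightarrow> complex fls" where
  "G_comp \<nu> S = fps_to_fls (fps_compose (G_fps \<nu>) (fls_regpart (inverse S)))"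

end

(* Write a = a1 + a2 and f = f1 + f2. Since B -> A, (a, g) |-> a is a homomorphism, the
   phi-distribution of b = a + f is that of a. For phi', expand b^n by the first and the last
   occurrence of f: b^n = a^n + sum a^p (f b^(r-2) f) a^q. Cyclic-antimonotone independence
   lets Phi factor out phi(a^(p+q)) and replace every inner block a^c of f b^(r-2) f by its
   moment, so tau_r = Phi(f b^(r-2) f) = sum_k [u^r] (u^k m(u)^(k-1)) eta_k, where m is the
   moment series of a and eta_k = Phi(f^k). In generating functions this says
   nu = (u m)' tau and tau m = eta(u m), which is G_nu = G_eta(F_mu) F_mu' written in u = 1/z.
   Finally, trivial independence kills every mixed word in (f1 + f2)^k, so eta = nu1 + nu2. *)

theory Submission
  imports Defs "HOL-Library.Product_Plus"
begin

text \<open>The total weight \<open>\<Prod>\<^sub>i \<mu> c\<^sub>i\<close> of the words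
  \<open>f a\<^bsup>c\<^sub>1\<^esup> f \<dots> a\<^bsup>c\<^sub>M\<^sub>-\<^sub>1\<^esup> f\<close> of length \<open>r\<close>.\<close>
definition fword_weight :: "(nat \<Rightarrow> complex) \<Rightarrow> nat \<Rightarrow> nat \<Rightarrow> complex" where
  "fword_weight \<mu> M r = (fps_X ^ M * Abs_fps \<mu> ^ (M - 1)) $ r"

lemma fword_weight_eq_0: "r < M \<Longrightarrow> fword_weight \<mu> M r = 0"
  by (simp add: fword_weight_def fps_X_power_mult_nth)

lemma fword_weight_0_Suc: "fword_weight \<mu> 0 (Suc r) = 0"
  by (simp add: fword_weight_def)

lemma fword_weight_length_1: "fword_weight \<mu> M (Suc 0) = (if M = Suc 0 then 1 else 0)"
  by (cases M) (auto simp: fword_weight_def fps_X_power_mult_nth)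

lemma fword_weight_Suc:
  "fword_weight \<mu> (Suc M) (Suc (Suc r)) = (\<Sum>j\<le>r. \<mu> j * fword_weight \<mu> M (Suc r - j))"
proof (cases M)
  case 0
  then show ?thesis by (simp add: fword_weight_def)
next
  case (Suc M')
  define P where "P = fps_X ^ M * Abs_fps \<mu> ^ (M - 1)"
  have "fps_X ^ Suc M * Abs_fps \<mu> ^ (Suc M - 1) = fps_X * (Abs_fps \<mu> * P)"
    by (simp add: P_def Suc algebra_simps)
  then have "fword_weight \<mu> (Suc M) (Suc (Suc r)) = (Abs_fps \<mu> * P) $ Suc r"
    by (simp only: fword_weight_def fps_X_mult_nth) simp
  also have "\<dots> = (\<Sum>i\<le>Suc r. \<mu> i * P $ (Suc r - i))"
    by (simp add: fps_mult_nth atLeast0AtMost)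
  also have "\<dots> = (\<Sum>i\<le>r. \<mu> i * P $ (Suc r - i))"
    by (simp add: P_def Suc)
  finally show ?thesis by (simp add: fword_weight_def P_def)
qed

lemma fword_weight_compose:
  assumes "\<eta> 0 = 0"
  shows "Abs_fps (\<lambda>r. \<Sum>M\<le>r. fword_weight \<mu> M r * \<eta> M) * Abs_fps \<mu>
           = Abs_fps \<eta> oo (fps_X * Abs_fps \<mu>)"
proof (rule fps_ext)
  fix n
  have weights_times: "Abs_fps (fword_weight \<mu> M) * Abs_fps \<mu> = (fps_X * Abs_fps \<mu>) ^ M"
    if "M \<noteq> 0" for M
  proof -
    have "Abs_fps (fword_weight \<mu> M) = fps_X ^ M * Abs_fps \<mu> ^ (M - 1)"
      by (simp add: fword_weight_def fps_eq_iff)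
    with that show ?thesis by (cases M) (simp_all add: algebra_simps)
  qed
  have extend: "(\<Sum>M\<le>i. fword_weight \<mu> M i * \<eta> M) = (\<Sum>M\<le>n. fword_weight \<mu> M i * \<eta> M)"
    if "i \<le> n" for i
    by (rule sum.mono_neutral_left) (use that in \<open>auto simp: fword_weight_eq_0\<close>)
  have "(Abs_fps (\<lambda>r. \<Sum>M\<le>r. fword_weight \<mu> M r * \<eta> M) * Abs_fps \<mu>) $ n
      = (\<Sum>i\<le>n. \<Sum>M\<le>n. fword_weight \<mu> M i * \<eta> M * \<mu> (n - i))"
    by (simp add: fps_mult_nth atLeast0AtMost extend sum_distrib_right)
  also have "\<dots> = (\<Sum>M\<le>n. \<eta> M * (\<Sum>i\<le>n. fword_weight \<mu> M i * \<mu> (n - i)))"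
    by (subst sum.swap) (simp add: sum_distrib_left mult_ac)
  also have "\<dots> = (\<Sum>M\<le>n. \<eta> M * (Abs_fps (fword_weight \<mu> M) * Abs_fps \<mu>) $ n)"
    by (simp only: fps_mult_nth atLeast0AtMost fps_nth_Abs_fps)
  also have "\<dots> = (\<Sum>M\<le>n. \<eta> M * (fps_X * Abs_fps \<mu>) ^ M $ n)"
    by (intro sum.cong refl) (metis assms weights_times mult_zero_left)
  also have "\<dots> = (Abs_fps \<eta> oo (fps_X * Abs_fps \<mu>)) $ n"
    by (simp add: fps_compose_nth atLeast0AtMost)
  finally show "(Abs_fps (\<lambda>r. \<Sum>M\<le>r. fword_weight \<mu> M r * \<eta> M) * Abs_fps \<mu>) $ n
      = (Abs_fps \<eta> oo (fps_X * Abs_fps \<mu>)) $ n" .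
qed

lemma fps_deriv_X_mult_times_nth:
  assumes "\<tau> 0 = 0"
  shows "(fps_deriv (fps_X * Abs_fps \<mu>) * Abs_fps \<tau>) $ n
           = (\<Sum>p<n. \<Sum>j\<le>n - 1 - p. \<mu> (p + j) * \<tau> (Suc (n - 1 - p) - j))"
proof -
  have "fps_deriv (fps_X * Abs_fps \<mu>) $ k = of_nat (Suc k) * \<mu> k" for k
    by (simp only: fps_deriv_nth fps_X_mult_nth) simp
  then have "(fps_deriv (fps_X * Abs_fps \<mu>) * Abs_fps \<tau>) $ n = (\<Sum>k\<le>n. of_nat (Suc k) * \<mu> k * \<tau> (n - k))"
    by (simp only: fps_mult_nth atLeast0AtMost fps_nth_Abs_fps)
  also have "\<dots> = (\<Sum>k<n. \<Sum>i\<le>k. \<mu> (i + (k - i)) * \<tau> (n - (i + (k - i))))"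
    using assms by (simp add: lessThan_Suc_atMost[symmetric] mult.assoc)
  also have "\<dots> = (\<Sum>(p, j)\<in>{(p, j). p + j < n}. \<mu> (p + j) * \<tau> (n - (p + j)))"
    by (rule sum.triangle_reindex[symmetric])
  also have "{(p, j). p + j < n} = Sigma {..<n} (\<lambda>p. {..n - 1 - p})"
    by auto
  also have "(\<Sum>(p, j)\<in>Sigma {..<n} (\<lambda>p. {..n - 1 - p}). \<mu> (p + j) * \<tau> (n - (p + j)))
      = (\<Sum>p<n. \<Sum>j\<le>n - 1 - p. \<mu> (p + j) * \<tau> (n - (p + j)))"
    by (rule sum.Sigma[symmetric]) auto
  also have "\<dots> = (\<Sum>p<n. \<Sum>j\<le>n - 1 - p. \<mu> (p + j) * \<tau> (Suc (n - 1 - p) - j))"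
    by (intro sum.cong refl arg_cong[where f = "\<lambda>k. _ * \<tau> k"]) auto
  finally show ?thesis .
qed

lemma G_ser_eq_G_comp_deriv_z:
  assumes "\<mu> 0 = 1"
    and compose: "Abs_fps \<tau> * Abs_fps \<mu> = Abs_fps \<eta> oo (fps_X * Abs_fps \<mu>)"
    and moments: "Abs_fps \<nu> = fps_deriv (fps_X * Abs_fps \<mu>) * Abs_fps \<tau>"
  shows "G_ser \<nu> = G_comp \<eta> (F_ser \<mu>) * deriv_z (F_ser \<mu>)"
proof -
  define g where "g = G_ser \<mu>"
  define m where "m = fps_to_fls (Abs_fps \<mu>)"
  define t where "t = fps_to_fls (Abs_fps \<tau>)"
  have "m \<noteq> 0"
    using assms(1) by (auto simp: m_def fls_eq_iff)
  moreover have g_eq: "g = fls_X * m"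
    by (simp add: g_def m_def G_ser_def G_fps_def fls_times_fps_to_fls)
  ultimately have "g \<noteq> 0"
    by simp
  have "fls_deriv (inverse g) * g = - (inverse g * fls_deriv g)"
    using fls_deriv_mult[of "inverse g" g] \<open>g \<noteq> 0\<close> by (simp add: add_eq_0_iff2)
  then have "fls_deriv (inverse g) = - inverse g * fls_deriv g / g"
    using \<open>g \<noteq> 0\<close> by (metis minus_mult_left nonzero_eq_divide_eq)
  then have deriv_z_F: "deriv_z (F_ser \<mu>) = fls_X ^ 2 * fls_deriv g * inverse g / g"
    by (simp add: deriv_z_def F_ser_def g_def[symmetric])
  have "(fps_X * Abs_fps \<eta>) oo (fps_X * Abs_fps \<mu>) = (fps_X * Abs_fps \<mu>) * (Abs_fps \<tau> * Abs_fps \<mu>)"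
    by (simp add: compose fps_compose_mult_distrib)
  moreover have "G_comp \<eta> (F_ser \<mu>) = fps_to_fls ((fps_X * Abs_fps \<eta>) oo (fps_X * Abs_fps \<mu>))"
    by (simp add: G_comp_def F_ser_def G_ser_def G_fps_def)
  ultimately have "G_comp \<eta> (F_ser \<mu>) = g * t * m"
    by (simp add: g_def G_ser_def G_fps_def t_def m_def fls_times_fps_to_fls mult.assoc)
  moreover have "G_ser \<nu> = fls_X * fls_deriv g * t"
    by (simp add: G_ser_def G_fps_def moments g_def t_def fls_times_fps_to_fls fls_deriv_fps_to_fls)
  ultimately show ?thesis
    using \<open>g \<noteq> 0\<close> \<open>m \<noteq> 0\<close> by (simp add: deriv_z_F g_eq field_simps power2_eq_square)
qed

lemma alternating_Cons: "alternating (i # js) \<longleftrightarrow> (js = [] \<or> i \<noteq> hd js) \<and> alternating js"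
  by (cases js) (auto simp: alternating_def less_Suc_eq_0_disj All_less_Suc2)

locale B'_ncps =
  fixes sA :: "complex \<Rightarrow> 'a::ring_1 \<Rightarrow> 'a" and sF :: "complex \<Rightarrow> 'f::ring \<Rightarrow> 'f"
    and lA :: "'a \<Rightarrow> 'f \<Rightarrow> 'f" and rA :: "'f \<Rightarrow> 'a \<Rightarrow> 'f"
    and \<phi> :: "'a \<Rightarrow> complex" and \<Phi> :: "'f \<Rightarrow> complex"
  assumes ncps: "ncps_B' sA sF lA rA \<phi> \<Phi>"
begin

abbreviation mult_B :: "'a \<times> 'f \<Rightarrow> 'a \<times> 'f \<Rightarrow> 'a \<times> 'f"  (infixl "\<cdot>" 70)
  where "x \<cdot> y \<equiv> mulB lA rA x y"

abbreviation "bprod \<equiv> prodB lA rA"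
abbreviation "bpow \<equiv> powB lA rA"

lemma bimodule:
  "lA (a + b) f = lA a f + lA b f" "lA a (f + g) = lA a f + lA a g"
  "rA (f + g) a = rA f a + rA g a" "rA f (a + b) = rA f a + rA f b"
  "lA 1 f = f" "rA f 1 = f"
  "lA (a * b) f = lA a (lA b f)" "rA f (a * b) = rA (rA f a) b" "lA a (rA f b) = rA (lA a f) b"
  "lA a (f * g) = lA a f * g" "rA (f * g) a = f * rA g a" "rA f a * g = f * lA a g"
  using ncps by (simp_all add: ncps_B'_def)

lemma phi_one: "\<phi> 1 = 1"
  using ncps by (simp add: ncps_B'_def)

lemma Phi_add: "\<Phi> (x + y) = \<Phi> x + \<Phi> y"
  using ncps by (simp add: ncps_B'_def lin_fun_def)

lemma bimodule_zero [simp]: "lA a 0 = 0" "lA 0 f = 0" "rA 0 a = 0" "rA f 0 = 0"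
  using bimodule(2)[of a 0 0] bimodule(1)[of 0 0 f] bimodule(3)[of 0 0 a] bimodule(4)[of f 0 0]
  by simp_all

lemma Phi_zero [simp]: "\<Phi> 0 = 0"
  using Phi_add[of 0 0] by simp

lemma Phi_sum: "\<Phi> (\<Sum>i\<in>I. x i) = (\<Sum>i\<in>I. \<Phi> (x i))"
  by (induction I rule: infinite_finite_induct) (simp_all add: Phi_add)

lemma mulB_assoc: "x \<cdot> y \<cdot> z = x \<cdot> (y \<cdot> z)"
  by (simp add: mulB_def bimodule algebra_simps)

lemma mulB_add_left: "(x + y) \<cdot> z = x \<cdot> z + y \<cdot> z"
  and mulB_add_right: "z \<cdot> (x + y) = z \<cdot> x + z \<cdot> y"
  by (simp_all add: mulB_def bimodule algebra_simps)

lemma mulB_zero [simp]: "0 \<cdot> x = 0" "x \<cdot> 0 = 0"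
  by (simp_all add: mulB_def zero_prod_def)

lemma mulB_oneB [simp]: "oneB \<cdot> x = x" "x \<cdot> oneB = x"
  by (simp_all add: mulB_def oneB_def bimodule)

lemma mulB_sum_left: "(\<Sum>i\<in>I. x i) \<cdot> z = (\<Sum>i\<in>I. x i \<cdot> z)"
  by (induction I rule: infinite_finite_induct) (simp_all add: mulB_add_left)

lemma mulB_sum_right: "z \<cdot> (\<Sum>i\<in>I. x i) = (\<Sum>i\<in>I. z \<cdot> x i)"
  by (induction I rule: infinite_finite_induct) (simp_all add: mulB_add_right)

lemma mulB_Pair_zero: "(x, 0) \<cdot> (y, 0) = (x * y, 0)"
  by (simp add: mulB_def)

lemma Pair_one_zero_eq_oneB: "(1, 0) = oneB"
  by (simp add: oneB_def)

lemma prodB_Nil [simp]: "bprod [] = oneB"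
  and prodB_Cons [simp]: "bprod (x # xs) = x \<cdot> bprod xs"
  by (simp_all add: prodB_def)

lemma fst_powB: "fst (bpow b n) = fst b ^ n"
  by (induction n) (simp_all add: oneB_def mulB_def)

lemma powB_Suc_right: "bpow b (Suc n) = bpow b n \<cdot> b"
proof (induction n)
  case (Suc n)
  then show ?case by (metis powB.simps(2) mulB_assoc)
qed simp

definition fprod :: "'f list \<Rightarrow> 'f" where
  "fprod gs = snd (bprod (map (\<lambda>g. (0, g)) gs))"

lemma fprod_Nil [simp]: "fprod [] = 0"
  by (simp add: fprod_def oneB_def)

lemma fprod_Cons: "fprod (g # gs) = (if gs = [] then g else g * fprod gs)"
proof -
  have "fst (bprod (map (\<lambda>g. (0, g)) gs)) = (if gs = [] then 1 else 0)"
    by (induction gs) (simp_all add: oneB_def mulB_def)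
  then show ?thesis
    by (simp add: fprod_def mulB_def bimodule oneB_def)
qed

lemma fprod_add_at: "fprod (xs @ (g + h) # ys) = fprod (xs @ g # ys) + fprod (xs @ h # ys)"
  by (induction xs) (simp_all add: fprod_Cons algebra_simps)

lemma fprod_mult_at: "fprod (xs @ g # h # ys) = fprod (xs @ (g * h) # ys)"
  by (induction xs) (simp_all add: fprod_Cons algebra_simps)

lemma fprod_sum_at: "fprod (xs @ (\<Sum>i\<in>I. h i) # ys) = (\<Sum>i\<in>I. fprod (xs @ h i # ys))"
proof -
  have "fprod (xs @ 0 # ys) = 0"
    by (induction xs) (simp_all add: fprod_Cons)
  then show ?thesis
    by (induction I rule: infinite_finite_induct) (simp_all add: fprod_add_at)
qed

lemma snd_powB_Pair_zero: "snd (bpow (0, g) M) = fprod (replicate M g)"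
proof -
  have "bpow x M = bprod (replicate M x)" for x
    by (induction M) simp_all
  then show ?thesis
    by (simp add: fprod_def)
qed

context
  fixes J :: "'j set" and Fs :: "'j \<Rightarrow> 'f set" and g :: "'j \<Rightarrow> 'f"
  assumes trivially_independent:
      "\<And>js gs. \<lbrakk>length gs = length js; 2 \<le> length gs; set js \<subseteq> J; alternating js;
         \<forall>l<length gs. gs ! l \<in> Fs (js ! l)\<rbrakk> \<Longrightarrow> \<Phi> (fprod gs) = 0"
    and Fs_mult: "\<And>j x y. \<lbrakk>j \<in> J; x \<in> Fs j; y \<in> Fs j\<rbrakk> \<Longrightarrow> x * y \<in> Fs j"
    and g_in_Fs: "\<And>j. j \<in> J \<Longrightarrow> g j \<in> Fs j"
    and finite_J: "finite J"
begin

text \<open>Of the summands \<open>g j\<close> of the leftmost factor, the one with the index of the first letter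
  of \<open>ts\<close> merges with it, and every other one makes the alternating word longer.\<close>
lemma Phi_fprod_replicate_sum_append:
  assumes "length ts = length js" "ts \<noteq> []" "set js \<subseteq> J" "alternating js"
    "\<forall>l<length ts. ts ! l \<in> Fs (js ! l)"
  shows "\<Phi> (fprod (replicate M (\<Sum>j\<in>J. g j) @ ts)) =
    (if length ts = 1 then \<Phi> (fprod (replicate M (g (hd js)) @ ts)) else 0)"
  using assms
proof (induction M arbitrary: ts js)
  case 0
  then show ?case
    using trivially_independent[of ts js] by (cases ts) auto
next
  case (Suc M)
  let ?s = "\<Sum>j\<in>J. g j"
  obtain t ts' where ts: "ts = t # ts'"
    using Suc.prems(2) by (cases ts) auto
  obtain j js' where js: "js = j # js'"
    using Suc.prems(1,2) by (cases js) auto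
  have "j \<in> J" "t \<in> Fs j"
    using Suc.prems ts js by auto
  let ?X = "if length ts = 1 then \<Phi> (fprod (replicate (Suc M) (g j) @ ts)) else 0"
  have summand: "\<Phi> (fprod (replicate M ?s @ g i # ts)) =
      (if i = j then ?X else 0)"
    if "i \<in> J" for i
  proof (cases "i = j")
    case True
    have "\<Phi> (fprod (replicate M ?s @ g i # ts)) = \<Phi> (fprod (replicate M ?s @ (g i * t) # ts'))"
      by (simp add: ts fprod_mult_at)
    also have "\<dots> = (if length ts = 1 then \<Phi> (fprod (replicate M (g j) @ (g j * t) # ts')) else 0)"
      using Suc.prems ts js True Fs_mult[OF \<open>j \<in> J\<close> g_in_Fs[OF \<open>j \<in> J\<close>] \<open>t \<in> Fs j\<close>]
      by (subst Suc.IH[of _ js]) (auto simp: nth_Cons')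
    finally show ?thesis
      using True by (simp add: ts fprod_mult_at[symmetric] replicate_app_Cons_same)
  next
    case False
    have "alternating (i # js)"
      using False Suc.prems(4) js by (simp add: alternating_Cons)
    then show ?thesis
      using Suc.prems False g_in_Fs[OF that] that
      by (subst Suc.IH[of _ "i # js"]) (auto simp: nth_Cons')
  qed
  have "replicate (Suc M) ?s @ ts = replicate M ?s @ ?s # ts"
    by (simp add: replicate_app_Cons_same)
  then have "\<Phi> (fprod (replicate (Suc M) ?s @ ts)) = (\<Sum>i\<in>J. \<Phi> (fprod (replicate M ?s @ g i # ts)))"
    by (simp only: fprod_sum_at Phi_sum)
  also have "\<dots> = (\<Sum>i\<in>J. if i = j then ?X else 0)"
    by (rule sum.cong) (simp_all add: summand)
  also have "\<dots> = ?X"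
    using finite_J \<open>j \<in> J\<close> by simp
  finally show ?case
    by (simp add: js)
qed

lemma Phi_fprod_replicate_sum:
  "\<Phi> (fprod (replicate M (\<Sum>j\<in>J. g j))) = (\<Sum>j\<in>J. \<Phi> (fprod (replicate M (g j))))"
proof (cases M)
  case (Suc K)
  have "\<Phi> (fprod (replicate M (\<Sum>j\<in>J. g j))) = (\<Sum>j\<in>J. \<Phi> (fprod (replicate K (\<Sum>j\<in>J. g j) @ [g j])))"
    by (simp add: Suc replicate_append_same[symmetric] fprod_sum_at Phi_sum)
  also have "\<dots> = (\<Sum>j\<in>J. \<Phi> (fprod (replicate M (g j))))"
    using g_in_Fs
    by (intro sum.cong refl, subst Phi_fprod_replicate_sum_append[of _ "[_]"])
      (auto simp: Suc alternating_def replicate_append_same)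
  finally show ?thesis .
qed simp

end

definition fsandwich :: "'a \<Rightarrow> 'f \<Rightarrow> nat \<Rightarrow> 'a \<times> 'f" where
  "fsandwich a f r = (case r of 0 \<Rightarrow> 0 | Suc 0 \<Rightarrow> (0, f)
     | Suc (Suc k) \<Rightarrow> (0, f) \<cdot> bpow (a, f) k \<cdot> (0, f))"

lemma fsandwich_simps:
  "fsandwich a f (Suc 0) = (0, f)"
  "fsandwich a f (Suc (Suc k)) = (0, f) \<cdot> bpow (a, f) k \<cdot> (0, f)"
  by (simp_all add: fsandwich_def)

lemma f_mulB_powB_by_last_f:
  "(0, f) \<cdot> bpow (a, f) k = (\<Sum>j\<le>k. fsandwich a f (Suc k - j) \<cdot> (a ^ j, 0))"
proof (induction k)
  case 0
  then show ?case by (simp add: fsandwich_simps Pair_one_zero_eq_oneB)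
next
  case (Suc k)
  let ?U = "(0, f) \<cdot> bpow (a, f) k"
  have "(0, f) \<cdot> bpow (a, f) (Suc k) = ?U \<cdot> ((a, 0) + (0, f))"
    by (simp only: powB_Suc_right mulB_assoc) simp
  also have "\<dots> = ?U \<cdot> (a, 0) + ?U \<cdot> (0, f)"
    by (rule mulB_add_right)
  also have "?U \<cdot> (a, 0) = (\<Sum>j\<le>k. fsandwich a f (Suc k - j) \<cdot> (a ^ Suc j, 0))"
    by (simp only: Suc mulB_sum_left mulB_assoc mulB_Pair_zero power_Suc2)
  also have "?U \<cdot> (0, f) = fsandwich a f (Suc (Suc k)) \<cdot> (a ^ 0, 0)"
    by (simp add: fsandwich_simps Pair_one_zero_eq_oneB)
  also have "(\<Sum>j\<le>k. fsandwich a f (Suc k - j) \<cdot> (a ^ Suc j, 0)) + fsandwich a f (Suc (Suc k)) \<cdot> (a ^ 0, 0)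
      = (\<Sum>j\<le>Suc k. fsandwich a f (Suc (Suc k) - j) \<cdot> (a ^ j, 0))"
    by (simp only: sum.atMost_Suc_shift diff_Suc_Suc diff_zero add.commute)
  finally show ?case .
qed

lemma powB_pair_by_first_f:
  "bpow (a, f) n = (a ^ n, 0) + (\<Sum>p<n. (a ^ p, 0) \<cdot> ((0, f) \<cdot> bpow (a, f) (n - 1 - p)))"
proof (induction n)
  case 0
  then show ?case by (simp add: oneB_def)
next
  case (Suc n)
  let ?U = "\<lambda>m. (0, f) \<cdot> bpow (a, f) m"
  have "bpow (a, f) (Suc n) = (a, 0) \<cdot> bpow (a, f) n + ?U n"
    using mulB_add_left[of "(a, 0)" "(0, f)"] by simp
  also have "(a, 0) \<cdot> bpow (a, f) n = (a ^ Suc n, 0) + (\<Sum>p<n. (a ^ Suc p, 0) \<cdot> ?U (n - 1 - p))"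
    by (subst Suc) (simp only: mulB_add_right mulB_sum_right mulB_assoc[symmetric] mulB_Pair_zero power_Suc)
  also have "(a ^ Suc n, 0) + (\<Sum>p<n. (a ^ Suc p, 0) \<cdot> ?U (n - 1 - p)) + ?U n
      = (a ^ Suc n, 0) + (\<Sum>p<Suc n. (a ^ p, 0) \<cdot> ?U (Suc n - 1 - p))"
    by (simp add: sum.lessThan_Suc_shift Pair_one_zero_eq_oneB add.commute add.left_commute del: sum.lessThan_Suc)
  finally show ?case .
qed

end

locale cyclic_antimonotone = B'_ncps +
  fixes A0 and F0
  assumes antimonotone:
    "\<lbrakk>gs \<noteq> []; length cs = Suc (length gs); set cs \<subseteq> A0; set gs \<subseteq> F0\<rbrakk> \<Longrightarrow>
      \<Phi> (snd (prodB lA rA (interleave cs gs))) =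
        \<phi> (hd cs * last cs) * (\<Prod>l\<in>{1..<length gs}. \<phi> (cs ! l)) *
        \<Phi> (snd (prodB lA rA (map (\<lambda>g. (0, g)) gs)))"
begin

lemma Phi_interleave:
  "\<lbrakk>gs \<noteq> []; length cs = Suc (length gs); set cs \<subseteq> A0; set gs \<subseteq> F0\<rbrakk> \<Longrightarrow>
    \<Phi> (snd (bprod (interleave cs gs))) =
      \<phi> (hd cs * last cs) * (\<Prod>l\<in>{1..<length gs}. \<phi> (cs ! l)) * \<Phi> (fprod gs)"
  unfolding fprod_def by (rule antimonotone)

text \<open>Splitting off the last \<open>a\<^sup>j f\<close> of the sandwich moves it into the context; once the
  sandwich is the single letter \<open>f\<close>, the whole expression is one alternating word and
  cyclic-antimonotone independence evaluates it.\<close>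
lemma Phi_fsandwich_in_context:
  assumes powers: "\<And>j. a ^ j \<in> A0" and f: "f \<in> F0"
    and "0 < r" "r \<le> N" "c \<in> A0" "set cs \<subseteq> A0" "set gs \<subseteq> F0" "length cs = Suc (length gs)"
  shows "\<Phi> (snd ((c, 0) \<cdot> (fsandwich a f r \<cdot> bprod (interleave cs gs)))) =
    \<phi> (c * last cs) * (\<Prod>l<length gs. \<phi> (cs ! l)) *
      (\<Sum>M\<le>N. fword_weight (distA \<phi> a) M r * \<Phi> (fprod (replicate M f @ gs)))"
  using assms(3-)
proof (induction r arbitrary: N cs gs rule: less_induct)
  case (less r)
  let ?\<mu> = "distA \<phi> a"
  let ?C = "\<phi> (c * last cs) * (\<Prod>l<length gs. \<phi> (cs ! l))"
  let ?X = "\<lambda>M. \<Phi> (fprod (replicate M f @ gs))"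
  have "cs \<noteq> []"
    using less.prems by auto
  consider "r = Suc 0" | k where "r = Suc (Suc k)"
    using less.prems(1) by (metis gr0_conv_Suc not0_implies_Suc)
  then show ?case
  proof cases
    case 1
    have "(c, 0) \<cdot> (fsandwich a f r \<cdot> bprod (interleave cs gs)) = bprod (interleave (c # cs) (f # gs))"
      by (simp add: 1 fsandwich_simps)
    moreover have "(\<Prod>l\<in>{1..<Suc (length gs)}. \<phi> ((c # cs) ! l)) = (\<Prod>l<length gs. \<phi> (cs ! l))"
      by (simp only: One_nat_def prod.shift_bounds_Suc_ivl nth_Cons_Suc atLeast0LessThan)
    moreover have "(\<Sum>M\<le>N. fword_weight ?\<mu> M r * ?X M) = (\<Sum>M\<le>N. if M = 1 then ?X M else 0)"
      by (intro sum.cong) (simp_all add: 1 fword_weight_length_1)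
    moreover have "\<dots> = ?X 1"
      using less.prems(2) 1 by simp
    ultimately show ?thesis
      using Phi_interleave[of "f # gs" "c # cs"] less.prems f \<open>cs \<noteq> []\<close> by simp
  next
    case 2
    obtain N' where N: "N = Suc N'"
      using less.prems(2) 2 by (cases N) auto
    have "(c, 0) \<cdot> (fsandwich a f r \<cdot> bprod (interleave cs gs)) =
        (\<Sum>j\<le>k. (c, 0) \<cdot> (fsandwich a f (Suc k - j) \<cdot> bprod (interleave (a ^ j # cs) (f # gs))))"
      by (simp add: 2 fsandwich_simps f_mulB_powB_by_last_f mulB_sum_left mulB_sum_right mulB_assoc)
    then have "\<Phi> (snd ((c, 0) \<cdot> (fsandwich a f r \<cdot> bprod (interleave cs gs)))) =
        (\<Sum>j\<le>k. \<Phi> (snd ((c, 0) \<cdot> (fsandwich a f (Suc k - j) \<cdot> bprod (interleave (a ^ j # cs) (f # gs))))))"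
      by (simp add: snd_sum Phi_sum)
    also have "\<dots> = (\<Sum>j\<le>k. ?C * (?\<mu> j * (\<Sum>M\<le>N'. fword_weight ?\<mu> M (Suc k - j) * ?X (Suc M))))"
    proof (rule sum.cong [OF refl])
      fix j assume "j \<in> {..k}"
      have prod_context: "(\<Prod>l<length (f # gs). \<phi> ((a ^ j # cs) ! l)) = ?\<mu> j * (\<Prod>l<length gs. \<phi> (cs ! l))"
        by (simp only: length_Cons prod.lessThan_Suc_shift nth_Cons_0 nth_Cons_Suc distA_def)
      with \<open>j \<in> {..k}\<close> have "\<Phi> (snd ((c, 0) \<cdot> (fsandwich a f (Suc k - j) \<cdot> bprod (interleave (a ^ j # cs) (f # gs))))) =
        \<phi> (c * last (a ^ j # cs)) * (\<Prod>l<length (f # gs). \<phi> ((a ^ j # cs) ! l)) *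
        (\<Sum>M\<le>N'. fword_weight ?\<mu> M (Suc k - j) * \<Phi> (fprod (replicate M f @ f # gs)))"
        using less.prems 2 N powers f by (intro less.IH) auto
      then show "\<Phi> (snd ((c, 0) \<cdot> (fsandwich a f (Suc k - j) \<cdot> bprod (interleave (a ^ j # cs) (f # gs))))) =
          ?C * (?\<mu> j * (\<Sum>M\<le>N'. fword_weight ?\<mu> M (Suc k - j) * ?X (Suc M)))"
        using \<open>cs \<noteq> []\<close> prod_context
        by (simp add: replicate_app_Cons_same mult_ac)
    qed
    also have "\<dots> = ?C * (\<Sum>M\<le>N'. (\<Sum>j\<le>k. ?\<mu> j * fword_weight ?\<mu> M (Suc k - j)) * ?X (Suc M))"
      by (simp add: sum_distrib_left sum_distrib_right mult_ac sum.swap[of _ "{..k}"])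
    also have "\<dots> = ?C * (\<Sum>M\<le>N. fword_weight ?\<mu> M r * ?X M)"
      by (simp add: N 2 sum.atMost_Suc_shift fword_weight_Suc fword_weight_0_Suc del: sum.atMost_Suc)
    finally show ?thesis .
  qed
qed

lemma Abs_fps_distB_pair:
  assumes powers: "\<And>j. a ^ j \<in> A0" and f: "f \<in> F0"
  defines "\<tau> \<equiv> \<lambda>r. \<Sum>M\<le>r. fword_weight (distA \<phi> a) M r * \<Phi> (fprod (replicate M f))"
  shows "Abs_fps (distB lA rA (phiB' \<Phi>) (a, f)) = fps_deriv (fps_X * Abs_fps (distA \<phi> a)) * Abs_fps \<tau>"
proof (rule fps_ext)
  fix n
  have sandwich: "\<Phi> (snd ((a ^ p, 0) \<cdot> (fsandwich a f r \<cdot> (a ^ j, 0)))) = distA \<phi> a (p + j) * \<tau> r"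
    if "0 < r" for p j r
  proof -
    have "(a ^ j, 0) = bprod (interleave [a ^ j] [])"
      by simp
    then show ?thesis
      using Phi_fsandwich_in_context[OF powers f \<open>0 < r\<close>, of r "a ^ p" "[a ^ j]" "[]"] powers
      by (simp add: \<tau>_def distA_def power_add)
  qed
  have "distB lA rA (phiB' \<Phi>) (a, f) n = (\<Sum>p<n. \<Phi> (snd ((a ^ p, 0) \<cdot> ((0, f) \<cdot> bpow (a, f) (n - 1 - p)))))"
    unfolding distB_def phiB'_def powB_pair_by_first_f[of a f n] by (simp add: snd_sum Phi_add Phi_sum)
  also have "\<dots> = (\<Sum>p<n. \<Sum>j\<le>n - 1 - p. \<Phi> (snd ((a ^ p, 0) \<cdot> (fsandwich a f (Suc (n - 1 - p) - j) \<cdot> (a ^ j, 0)))))"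
    by (simp only: f_mulB_powB_by_last_f mulB_sum_right snd_sum Phi_sum)
  also have "\<dots> = (\<Sum>p<n. \<Sum>j\<le>n - 1 - p. distA \<phi> a (p + j) * \<tau> (Suc (n - 1 - p) - j))"
    by (intro sum.cong refl sandwich) auto
  also have "\<dots> = (fps_deriv (fps_X * Abs_fps (distA \<phi> a)) * Abs_fps \<tau>) $ n"
    by (rule fps_deriv_X_mult_times_nth[symmetric]) (simp add: \<tau>_def)
  finally show "Abs_fps (distB lA rA (phiB' \<Phi>) (a, f)) $ n = (fps_deriv (fps_X * Abs_fps (distA \<phi> a)) * Abs_fps \<tau>) $ n"
    by simp
qed

theorem G_ser_distB_pair:
  assumes "\<And>j. a ^ j \<in> A0" and "f \<in> F0"
  shows "G_ser (distB lA rA (phiB' \<Phi>) (a, f)) =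
    G_comp (distB lA rA (phiB' \<Phi>) (0, f)) (F_ser (distA \<phi> a)) * deriv_z (F_ser (distA \<phi> a))"
proof (rule G_ser_eq_G_comp_deriv_z)
  show "distA \<phi> a 0 = 1"
    by (simp add: distA_def phi_one)
  show "Abs_fps (distB lA rA (phiB' \<Phi>) (a, f)) = fps_deriv (fps_X * Abs_fps (distA \<phi> a)) *
      Abs_fps (\<lambda>r. \<Sum>M\<le>r. fword_weight (distA \<phi> a) M r * distB lA rA (phiB' \<Phi>) (0, f) M)"
    using Abs_fps_distB_pair[OF assms] by (simp add: distB_def phiB'_def snd_powB_Pair_zero)
qed (simp add: fword_weight_compose distB_def phiB'_def oneB_def)

end

lemma unital_alg_gen_subset: "X \<subseteq> unital_alg_gen s X"
  by (auto simp: unital_alg_gen_def)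

lemma unital_alg_gen_add: "\<lbrakk>x \<in> unital_alg_gen s X; y \<in> unital_alg_gen s X\<rbrakk> \<Longrightarrow> x + y \<in> unital_alg_gen s X"
  and unital_alg_gen_mult: "\<lbrakk>x \<in> unital_alg_gen s X; y \<in> unital_alg_gen s X\<rbrakk> \<Longrightarrow> x * y \<in> unital_alg_gen s X"
  and unital_alg_gen_one: "1 \<in> unital_alg_gen s X"
  by (auto simp: unital_alg_gen_def unital_subalg_def)

lemma unital_alg_gen_power: "x \<in> unital_alg_gen s X \<Longrightarrow> x ^ n \<in> unital_alg_gen s X"
  by (induction n) (simp_all add: unital_alg_gen_one unital_alg_gen_mult)

lemma alg_gen_subset: "X \<subseteq> alg_gen s X"
  by (auto simp: alg_gen_def)

lemma alg_gen_add: "\<lbrakk>x \<in> alg_gen s X; y \<in> alg_gen s X\<rbrakk> \<Longrightarrow> x + y \<in> alg_gen s X"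
  and alg_gen_mult: "\<lbrakk>x \<in> alg_gen s X; y \<in> alg_gen s X\<rbrakk> \<Longrightarrow> x * y \<in> alg_gen s X"
  by (auto simp: alg_gen_def subalg_def)

theorem corollary3p4:
  fixes sA :: "complex \<Rightarrow> 'a::ring_1 \<Rightarrow> 'a" and sF :: "complex \<Rightarrow> 'f::ring \<Rightarrow> 'f"
    and lA :: "'a \<Rightarrow> 'f \<Rightarrow> 'f" and rA :: "'f \<Rightarrow> 'a \<Rightarrow> 'f"
    and \<phi> :: "'a \<Rightarrow> complex" and \<Phi> :: "'f \<Rightarrow> complex"
    and a1 a2 :: 'a and f1 f2 :: 'f
    and \<mu>1 \<mu>2 \<nu>1 \<nu>2 :: "nat \<Rightarrow> complex"
  assumes ncps: "ncps_B' sA sF lA rA \<phi> \<Phi>"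
    and free: "B'_free sA sF lA rA \<phi> \<Phi> {1::nat, 2}
                 (\<lambda>i. unital_alg_gen sA {if i = 1 then a1 else a2}) {1::nat, 2}
                 (\<lambda>j. alg_gen sF {if j = 1 then f1 else f2})"
    and \<mu>1: "\<mu>1 = distA \<phi> a1" and \<mu>2: "\<mu>2 = distA \<phi> a2"
    and \<nu>1: "\<nu>1 = distB lA rA (phiB' \<Phi>) (0, f1)"
    and \<nu>2: "\<nu>2 = distB lA rA (phiB' \<Phi>) (0, f2)"
  shows "let \<mu> = distA \<phi> (a1 + a2);  \<comment> \<open>= \<mu>1 \<boxplus> \<mu>2, by definition of free convolution\<close>
             b = (a1 + a2, f1 + f2);  \<comment> \<open>b_1 + b_2 in B\<close>
             \<nu> = distB lA rA (phiB' \<Phi>) b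
         in distB lA rA (phiB \<phi>) b = \<mu> \<and>
            G_ser \<nu> = G_comp (\<lambda>n. \<nu>1 n + \<nu>2 n) (F_ser \<mu>) * deriv_z (F_ser \<mu>)"
proof -
  interpret B'_ncps sA sF lA rA \<phi> \<Phi>
    by (rule B'_ncps.intro [OF ncps])
  define A0 where "A0 = unital_alg_gen sA (\<Union>i\<in>{1::nat, 2}. unital_alg_gen sA {if i = 1 then a1 else a2})"
  define Fs where "Fs = (\<lambda>j::nat. alg_gen sF {if j = 1 then f1 else f2})"
  define F0 where "F0 = alg_gen sF (\<Union>j\<in>{1::nat, 2}. Fs j)"
  interpret cyclic_antimonotone sA sF lA rA \<phi> \<Phi> A0 F0
    using free by unfold_locales (auto simp: B'_free_def Let_def A0_def F0_def Fs_def)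
  have "a1 \<in> A0" "a2 \<in> A0" "f1 \<in> F0" "f2 \<in> F0"
    unfolding A0_def F0_def Fs_def
    by (force intro: subsetD [OF unital_alg_gen_subset] subsetD [OF alg_gen_subset])+
  then have "(a1 + a2) ^ j \<in> A0" "f1 + f2 \<in> F0" for j
    by (simp_all add: A0_def F0_def unital_alg_gen_add unital_alg_gen_power alg_gen_add)
  moreover have "distB lA rA (phiB' \<Phi>) (0, f1 + f2) = (\<lambda>n. \<nu>1 n + \<nu>2 n)"
    using Phi_fprod_replicate_sum [of "{1::nat, 2}" Fs "\<lambda>j. if j = 1 then f1 else f2"] free
    by (auto simp: \<nu>1 \<nu>2 distB_def phiB'_def snd_powB_Pair_zero B'_free_def Fs_def fprod_def
        alg_gen_mult subsetD [OF alg_gen_subset])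
  moreover have "distB lA rA (phiB \<phi>) (a1 + a2, f1 + f2) = distA \<phi> (a1 + a2)"
    by (simp add: fun_eq_iff distB_def phiB_def distA_def fst_powB)
  ultimately show ?thesis
    using G_ser_distB_pair by (simp add: Let_def)
qed

end
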